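(* Let $m,\ell$ be positive integers and $r$ an integer. (a) If $r\in[2,2^m)$, then $\rho(t)\le 2^{m-t}$ for every positive integer $t$. (b) If $r\in[2^{m-1},2^m)$ with $r\ge2$, then $\rho(t)\le\min(2^{m-t},\,2^{t+3-m})$ for every positive integer $t$.
   Context: For integers $u$ and $N\ge1$, $\{u\}_N$ denotes the residue of $u$ modulo $N$ in $[-N/2,N/2)$. Let $\beta=2^{m+\ell}\bmod r$, $L=\lfloor2^{m+\ell}/r\rfloor$, and for an integer $j$ let $\alpha_r(j)=\{rj\}_{2^{m+\ell}}$. The probability of a frequency $j\in\{0,\dots,2^{m+\ell}-1\}$ is $$\frac{\beta}{2^{2(m+\ell)}}\Bigl|\sum_{b=0}^{L}e^{i\theta b}\Bigr|^2+\frac{r-\beta}{2^{2(m+\ell)}}\Bigl|\sum_{b=0}^{L-1}e^{i\theta b}\Bigr|^2,\qquad \theta=2\pi\alpha_r(j)/2^{m+\ell}.$$ For a positive integer $t$, $\rho(t)$ is the total probability of those $j\in\{0,\dots,2^{m+\ell}-1\}$ with $|\alpha_r(j)|\in[2^{t-1},2^t)$. *)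

theory Defs
  imports "HOL-Analysis.Analysis"
begin

definition cres :: "int \<Rightarrow> int \<Rightarrow> int" where
  "cres u N = (u + N div 2) mod N - N div 2"

definition alpha_r :: "nat \<Rightarrow> nat \<Rightarrow> int \<Rightarrow> int \<Rightarrow> int" where
  "alpha_r m l r j = cres (r * j) (2 ^ (m + l))"

definition freq_prob :: "nat \<Rightarrow> nat \<Rightarrow> int \<Rightarrow> int \<Rightarrow> real" where
  "freq_prob m l r j =
    (let N = (2::int) ^ (m + l);
         \<beta> = N mod r;
         L = nat (N div r);
         \<theta> = 2 * pi * real_of_int (alpha_r m l r j) / real_of_int N
     in real_of_int \<beta> / real_of_int N ^ 2 * (cmod (\<Sum>b\<le>L. cis (\<theta> * real b)))\<^sup>2
        + real_of_int (r - \<beta>) / real_of_int N ^ 2 * (cmod (\<Sum>b<L. cis (\<theta> * real b)))\<^sup>2)"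

definition rho :: "nat \<Rightarrow> nat \<Rightarrow> int \<Rightarrow> nat \<Rightarrow> real" where
  "rho m l r t = (\<Sum>j\<in>{j\<in>{0..<(2::int) ^ (m + l)}.
       2 ^ (t - 1) \<le> \<bar>alpha_r m l r j\<bar> \<and> \<bar>alpha_r m l r j\<bar> < 2 ^ t}. freq_prob m l r j)"

end

theory Submission
  imports Defs "HOL-Computational_Algebra.Primes"
begin

text \<open>
  A frequency j has probability at most \<open>r (B / 2^(m+l))\<^sup>2\<close> as soon as all partial sums
  \<open>\<Sum>b<k. cis (\<theta> b)\<close> with \<open>k \<le> L + 1\<close> have modulus at most B. If \<open>|\<alpha>\<^sub>r(j)| \<ge> 2^(t-1)\<close>,
  summing the geometric series and applying Jordan's inequality gives \<open>B = 2^(m+l) / 2^t\<close>,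
  hence probability at most \<open>r / 4^t\<close>; the trivial bound \<open>B = L + 1\<close> gives \<open>9 / (4 r)\<close>
  once \<open>2 r \<le> 2^(m+l)\<close>. On the counting side, \<open>\<alpha>\<^sub>r(j)\<close> is a multiple of the power of two
  \<open>d = gcd r 2^(m+l)\<close> and each value is taken by at most d frequencies, so at most \<open>2^t\<close>
  frequencies lie in the shell \<open>2^(t-1) \<le> |\<alpha>\<^sub>r(j)| < 2^t\<close>. Hence \<open>\<rho>(t) \<le> r / 2^t \<le> 2^(m-t)\<close>,
  and for \<open>r \<ge> 2^(m-1)\<close> also \<open>\<rho>(t) \<le> 2^t \<cdot> 9 / (4 r) \<le> 2^(t+3-m)\<close>.
\<close>

lemma abs_cres_le:
  fixes N :: int assumes "0 < N"
  shows "2 * \<bar>cres u N\<bar> \<le> N"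
proof -
  define h where "h = N div 2"
  define v where "v = (u + h) mod N"
  have "0 \<le> v" "v < N"
    using assms by (simp_all add: v_def)
  moreover have "2 * h \<le> N" "N \<le> 2 * h + 1"
    unfolding h_def by linarith+
  ultimately show ?thesis
    unfolding cres_def h_def[symmetric] v_def[symmetric] by arith
qed

lemma cres_mod: "cres u N mod N = u mod N"
  by (simp add: cres_def mod_diff_left_eq)

lemma gcd_dvd_cres_mult: "gcd r N dvd cres (r * j) N"
proof -
  have "N dvd cres (r * j) N - r * j"
    using cres_mod by (simp add: mod_eq_dvd_iff)
  then have "gcd r N dvd cres (r * j) N - r * j"
    by (rule dvd_trans[OF gcd_dvd2])
  then show ?thesis
    by (metis dvd_add_left_iff dvd_mult2 gcd_dvd1 diff_add_cancel)
qed

lemma card_le_if_cong_mod: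
  fixes S :: "int set" and K d :: int
  assumes K: "0 < K" and S: "S \<subseteq> {0..<d * K}"
    and cong: "\<And>x y. x \<in> S \<Longrightarrow> y \<in> S \<Longrightarrow> x mod K = y mod K"
  shows "card S \<le> nat d"
proof -
  have "inj_on (\<lambda>j. j div K) S"
  proof (rule inj_onI)
    fix x y assume "x \<in> S" "y \<in> S" "x div K = y div K"
    then show "x = y"
      using cong mult_div_mod_eq[of K x] mult_div_mod_eq[of K y] by metis
  qed
  moreover have "(\<lambda>j. j div K) ` S \<subseteq> {0..<d}"
  proof clarify
    fix j assume "j \<in> S"
    then have "0 \<le> j" "j < d * K" using S by auto
    then show "j div K \<in> {0..<d}"
      using K by (simp add: pos_imp_zdiv_nonneg_iff)
        (smt (verit, best) minus_mod_eq_div_mult mult_right_less_imp_less pos_mod_sign)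
  qed
  ultimately show ?thesis
    using card_inj_on_le[of "\<lambda>j. j div K" S "{0..<d}"] by simp
qed

lemma card_mult_mod_fiber_le:
  fixes N r c :: int assumes N: "0 < N"
  shows "card {j \<in> {0..<N}. (r * j) mod N = c} \<le> nat (gcd r N)"
proof -
  define d where "d = gcd r N"
  define K where "K = N div d"
  have N_eq: "N = d * K" and r_eq: "r = d * (r div d)"
    by (simp_all add: K_def d_def)
  have "0 < d" using N by (simp add: d_def)
  then have "0 < K" using N N_eq by (simp add: zero_less_mult_iff)
  have coprime: "coprime K (r div d)"
    using div_gcd_coprime[of r N] N by (simp add: K_def d_def coprime_commute)
  show ?thesis unfolding d_def[symmetric]
  proof (rule card_le_if_cong_mod[OF \<open>0 < K\<close>])
    show "{j \<in> {0..<N}. r * j mod N = c} \<subseteq> {0..<d * K}" using N_eq by auto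
  next
    fix x y assume "x \<in> {j \<in> {0..<N}. r * j mod N = c}" "y \<in> {j \<in> {0..<N}. r * j mod N = c}"
    then have "N dvd r * (x - y)"
      by (simp add: mod_eq_dvd_iff right_diff_distrib flip: mod_eq_dvd_iff)
    then have "d * K dvd d * ((r div d) * (x - y))"
      using N_eq r_eq by (metis mult.assoc)
    then have "K dvd (r div d) * (x - y)" using \<open>0 < d\<close> by simp
    then have "K dvd x - y" using coprime coprime_dvd_mult_right_iff by blast
    then show "x mod K = y mod K" by (simp add: mod_eq_dvd_iff)
  qed
qed

lemma card_cres_mult_in_le:
  fixes N r :: int and A :: "int set"
  assumes N: "0 < N" and A: "finite A"
  shows "card {j \<in> {0..<N}. cres (r * j) N \<in> A} \<le> nat (gcd r N) * card {a \<in> A. gcd r N dvd a}"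
proof -
  let ?A' = "{a \<in> A. gcd r N dvd a}"
  let ?fiber = "\<lambda>a. {j \<in> {0..<N}. (r * j) mod N = a mod N}"
  have "{j \<in> {0..<N}. cres (r * j) N \<in> A} \<subseteq> (\<Union>a\<in>?A'. ?fiber a)"
    using gcd_dvd_cres_mult cres_mod by fastforce
  then have "card {j \<in> {0..<N}. cres (r * j) N \<in> A} \<le> card (\<Union>a\<in>?A'. ?fiber a)"
    by (rule card_mono[rotated]) (use A in \<open>auto intro: finite_subset[OF _ finite_atLeastLessThan_int]\<close>)
  also have "\<dots> \<le> (\<Sum>a\<in>?A'. card (?fiber a))"
    by (rule card_UN_le) (use A in auto)
  also have "\<dots> \<le> (\<Sum>a\<in>?A'. nat (gcd r N))"
    by (intro sum_mono card_mult_mod_fiber_le N)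
  finally show ?thesis by (simp add: mult.commute)
qed

lemma card_pow2_multiples_in_dyadic_shell:
  fixes e k :: nat
  shows "int (card {a::int. 2 ^ k \<le> \<bar>a\<bar> \<and> \<bar>a\<bar> < 2 ^ Suc k \<and> 2 ^ e dvd a}) * 2 ^ e \<le> 2 ^ Suc k"
proof -
  define S where "S = {a::int. 2 ^ k \<le> \<bar>a\<bar> \<and> \<bar>a\<bar> < 2 ^ Suc k \<and> 2 ^ e dvd a}"
  define P where "P = {a::int. 2 ^ k \<le> a \<and> a < 2 ^ Suc k \<and> 2 ^ e dvd a}"
  have finite_P: "finite P"
    by (rule finite_subset[of _ "{2 ^ k..<2 ^ Suc k}"]) (auto simp: P_def)
  have "uminus ` P = {a. - a \<in> P}" by force
  then have "S = P \<union> uminus ` P"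
    by (auto simp: S_def P_def abs_if)
  then have "card S \<le> 2 * card P"
    using card_Un_le[of P "uminus ` P"] card_image_le[OF finite_P, of uminus] by simp
  moreover have "int (card P) * 2 ^ e \<le> 2 ^ k"
  proof (cases "e \<le> k")
    case True
    have "P \<subseteq> (\<lambda>q. 2 ^ e * q) ` {2 ^ (k - e)..<2 ^ (Suc k - e)}"
    proof
      fix a assume "a \<in> P"
      then obtain q where a: "a = 2 ^ e * q" "2 ^ k \<le> a" "a < 2 ^ Suc k"
        by (auto simp: P_def)
      have "(2::int) ^ k = 2 ^ e * 2 ^ (k - e)" "(2::int) ^ Suc k = 2 ^ e * 2 ^ (Suc k - e)"
        using True by (simp_all flip: power_add)
      then have "2 ^ (k - e) \<le> q" "q < 2 ^ (Suc k - e)"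
        using a by (simp_all add: mult_le_cancel_left_pos mult_less_cancel_left_pos)
      then show "a \<in> (\<lambda>q. 2 ^ e * q) ` {2 ^ (k - e)..<2 ^ (Suc k - e)}"
        using a by auto
    qed
    then have "card P \<le> card {(2::int) ^ (k - e)..<2 ^ (Suc k - e)}"
      using card_image_le[of "{(2::int) ^ (k - e)..<2 ^ (Suc k - e)}" "\<lambda>q. 2 ^ e * q"]
      by (meson card_mono finite_atLeastLessThan_int finite_imageI le_trans)
    also have "\<dots> = 2 ^ (k - e)"
      using True by (simp add: Suc_diff_le nat_diff_distrib)
    finally have "int (card P) * 2 ^ e \<le> 2 ^ (k - e) * 2 ^ e"
      by (simp add: mult_right_mono flip: of_nat_le_iff)
    also have "\<dots> = 2 ^ k"
      using True by (simp flip: power_add)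
    finally show ?thesis .
  next
    case False
    have "P = {}"
    proof (rule ccontr)
      assume "P \<noteq> {}"
      then obtain a :: int where "2 ^ k \<le> a" "a < 2 ^ Suc k" "2 ^ e dvd a"
        by (auto simp: P_def)
      moreover have "(2::int) ^ Suc k \<le> 2 ^ e"
        using False by (intro power_increasing) auto
      moreover have "(0::int) < 2 ^ k" by simp
      ultimately show False
        using zdvd_imp_le[of "2 ^ e" a] by linarith
    qed
    then show ?thesis by simp
  qed
  ultimately have "int (card S) * 2 ^ e \<le> 2 * (int (card P) * 2 ^ e)"
    by (simp add: mult_right_mono flip: of_nat_le_iff)
  also have "\<dots> \<le> 2 ^ Suc k"
    using \<open>int (card P) * 2 ^ e \<le> 2 ^ k\<close> by simp
  finally show ?thesis
    unfolding S_def .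
qed

lemma card_dyadic_shell_cres_mult_le:
  fixes M t :: nat and r :: int assumes "0 < t"
  shows "card {j \<in> {0..<2 ^ M}. 2 ^ (t - 1) \<le> \<bar>cres (r * j) (2 ^ M)\<bar> \<and> \<bar>cres (r * j) (2 ^ M)\<bar> < 2 ^ t} \<le> 2 ^ t"
proof -
  obtain k where t: "t = Suc k" using assms by (cases t) auto
  define A where "A = {a::int. 2 ^ k \<le> \<bar>a\<bar> \<and> \<bar>a\<bar> < 2 ^ Suc k}"
  have "finite A"
    by (rule finite_subset[of _ "{- (2 ^ Suc k)..2 ^ Suc k}"]) (auto simp: A_def)
  obtain e where e: "gcd r (2 ^ M) = 2 ^ e"
    using divides_primepow[OF two_is_prime, of "gcd r (2 ^ M)" M] by auto
  have "card {j \<in> {0..<2 ^ M}. cres (r * j) (2 ^ M) \<in> A} \<le> 2 ^ e * card {a \<in> A. 2 ^ e dvd a}"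
    using card_cres_mult_in_le[OF _ \<open>finite A\<close>, of "2 ^ M" r] e by (simp add: nat_power_eq)
  also have "\<dots> \<le> 2 ^ Suc k"
    unfolding of_nat_le_iff[symmetric, where 'a=int]
    using card_pow2_multiples_in_dyadic_shell[of k e] by (simp add: A_def mult.commute)
  finally show ?thesis by (simp add: t A_def)
qed

lemma norm_one_minus_cis: "cmod (1 - cis \<theta>) = 2 * \<bar>sin (\<theta> / 2)\<bar>"
proof -
  have "(cmod (1 - cis \<theta>))\<^sup>2 = (1 - cos \<theta>)\<^sup>2 + (sin \<theta>)\<^sup>2"
    by (simp add: cmod_def)
  also have "\<dots> = 2 - 2 * cos \<theta>"
    using sin_cos_squared_add[of \<theta>] by (simp add: power2_eq_square algebra_simps)
  also have "\<dots> = (2 * \<bar>sin (\<theta> / 2)\<bar>)\<^sup>2"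
    using cos_double_sin[of "\<theta> / 2"] by (simp add: power2_eq_square)
  finally show ?thesis
    by (metis power2_eq_iff_nonneg norm_ge_zero abs_ge_zero mult_nonneg_nonneg zero_le_numeral)
qed

lemma norm_sum_cis_le:
  assumes "sin (\<theta> / 2) \<noteq> 0"
  shows "cmod (\<Sum>b<n. cis (\<theta> * real b)) \<le> 1 / \<bar>sin (\<theta> / 2)\<bar>"
proof -
  have "cis \<theta> \<noteq> 1"
    using norm_one_minus_cis[of \<theta>] assms by auto
  have "(\<Sum>b<n. cis (\<theta> * real b)) = (\<Sum>b<n. cis \<theta> ^ b)"
    by (intro sum.cong refl) (simp add: Complex.DeMoivre mult.commute)
  also have "\<dots> = (1 - cis \<theta> ^ n) / (1 - cis \<theta>)"
    using \<open>cis \<theta> \<noteq> 1\<close> by (simp add: sum_gp_strict)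
  finally have "cmod (\<Sum>b<n. cis (\<theta> * real b)) = cmod (1 - cis \<theta> ^ n) / (2 * \<bar>sin (\<theta> / 2)\<bar>)"
    by (simp add: norm_divide norm_one_minus_cis)
  also have "\<dots> \<le> 2 / (2 * \<bar>sin (\<theta> / 2)\<bar>)"
    using norm_triangle_ineq4[of 1 "cis \<theta> ^ n"] by (intro divide_right_mono) (simp_all add: norm_power)
  finally show ?thesis by simp
qed

lemma sin_ge_Jordan:
  fixes x :: real assumes "0 \<le> x" "x \<le> pi / 2"
  shows "2 * x / pi \<le> sin x"
proof -
  have "convex_on {0..pi} (\<lambda>x. - sin x)"
    by (rule f''_ge0_imp_convex[where f'="\<lambda>x. - cos x" and f''="\<lambda>x. sin x"])
       (auto intro!: derivative_eq_intros sin_ge_zero)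
  moreover define u where "u = 2 * x / pi"
  moreover have "0 \<le> u" "u \<le> 1" "(1 - u) *\<^sub>R 0 + u *\<^sub>R (pi / 2) = x"
    using assms by (auto simp: u_def field_simps)
  ultimately show ?thesis
    using convex_onD[of "{0..pi}" "\<lambda>x. - sin x" u 0 "pi / 2"] by simp
qed

lemma abs_sin_ge_Jordan:
  fixes x :: real assumes "\<bar>x\<bar> \<le> pi / 2"
  shows "2 * \<bar>x\<bar> / pi \<le> \<bar>sin x\<bar>"
  using sin_ge_Jordan[of "\<bar>x\<bar>"] assms by (cases "0 \<le> x") simp_all

lemma norm_sum_cis_frac_le:
  fixes a N :: real assumes "a \<noteq> 0" and "2 * \<bar>a\<bar> \<le> N"
  shows "cmod (\<Sum>b<n. cis (2 * pi * a / N * real b)) \<le> N / (2 * \<bar>a\<bar>)"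
proof -
  define \<theta> where "\<theta> = 2 * pi * a / N"
  have "0 < N" using assms by linarith
  have half: "\<bar>\<theta> / 2\<bar> = pi * \<bar>a\<bar> / N"
    using \<open>0 < N\<close> by (simp add: \<theta>_def abs_mult)
  have "\<bar>\<theta> / 2\<bar> \<le> pi / 2"
    unfolding half using assms \<open>0 < N\<close> by (simp add: field_simps)
  then have "2 * \<bar>\<theta> / 2\<bar> / pi \<le> \<bar>sin (\<theta> / 2)\<bar>"
    by (rule abs_sin_ge_Jordan)
  then have sin_ge: "2 * \<bar>a\<bar> / N \<le> \<bar>sin (\<theta> / 2)\<bar>"
    unfolding half by simp
  moreover have "0 < 2 * \<bar>a\<bar> / N"
    using assms \<open>0 < N\<close> by simp
  ultimately have "1 / \<bar>sin (\<theta> / 2)\<bar> \<le> 1 / (2 * \<bar>a\<bar> / N)"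
    by (intro divide_left_mono mult_pos_pos) auto
  moreover have "cmod (\<Sum>b<n. cis (\<theta> * real b)) \<le> 1 / \<bar>sin (\<theta> / 2)\<bar>"
    using sin_ge \<open>0 < 2 * \<bar>a\<bar> / N\<close> by (intro norm_sum_cis_le) auto
  ultimately show ?thesis
    unfolding \<theta>_def by simp
qed

lemma freq_prob_le_partial_sums:
  fixes B :: real
  assumes r: "0 < r"
    and partial_sums: "\<And>k. k \<le> nat (2 ^ (m + l) div r) + 1 \<Longrightarrow>
      cmod (\<Sum>b<k. cis (2 * pi * alpha_r m l r j / 2 ^ (m + l) * real b)) \<le> B"
  shows "freq_prob m l r j \<le> real_of_int r * (B / 2 ^ (m + l))\<^sup>2"
proof -
  define N :: int where "N = 2 ^ (m + l)"
  define \<beta> where "\<beta> = N mod r"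
  define L where "L = nat (N div r)"
  define \<theta> where "\<theta> = 2 * pi * real_of_int (alpha_r m l r j) / real_of_int N"
  define S where "S k = cmod (\<Sum>b<k. cis (\<theta> * real b))" for k
  have "0 \<le> \<beta>" "\<beta> < r"
    using r by (simp_all add: \<beta>_def)
  have "S 0 = 0" by (simp add: S_def)
  \<comment> \<open>the instance \<open>k = 0\<close> of the hypothesis gives \<open>0 \<le> B\<close>\<close>
  then have sq: "(S k)\<^sup>2 \<le> B\<^sup>2" if "k \<le> L + 1" for k
    using partial_sums[of k] partial_sums[of 0] that
    by (intro power_mono) (simp_all add: S_def L_def \<theta>_def N_def)
  have "freq_prob m l r j = \<beta> / (real_of_int N)\<^sup>2 * (S (Suc L))\<^sup>2 + (r - \<beta>) / (real_of_int N)\<^sup>2 * (S L)\<^sup>2"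
    unfolding freq_prob_def Let_def N_def[symmetric] \<beta>_def[symmetric] L_def[symmetric]
      \<theta>_def[symmetric] S_def lessThan_Suc_atMost ..
  also have "\<dots> \<le> \<beta> / (real_of_int N)\<^sup>2 * B\<^sup>2 + (r - \<beta>) / (real_of_int N)\<^sup>2 * B\<^sup>2"
    using \<open>0 \<le> \<beta>\<close> \<open>\<beta> < r\<close> sq[of "Suc L"] sq[of L] by (intro add_mono mult_left_mono) auto
  also have "\<dots> = real_of_int r * (B / 2 ^ (m + l))\<^sup>2"
    by (simp add: N_def field_simps power2_eq_square)
  finally show ?thesis .
qed

lemma freq_prob_le_of_abs_alpha_r_ge:
  assumes "0 < r" and "0 < t" and "2 ^ (t - 1) \<le> \<bar>alpha_r m l r j\<bar>"
  shows "freq_prob m l r j \<le> real_of_int r / 4 ^ t"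
proof -
  define a where "a = real_of_int (alpha_r m l r j)"
  have "2 ^ (t - 1) \<le> \<bar>a\<bar>"
    using assms(3) unfolding a_def by (metis of_int_abs of_int_le_iff of_int_numeral of_int_power)
  moreover have "(2::real) ^ t = 2 * 2 ^ (t - 1)"
    using \<open>0 < t\<close> by (cases t) auto
  moreover have "(0::real) < 2 ^ (t - 1)" by simp
  ultimately have "0 < \<bar>a\<bar>" and "2 ^ t \<le> 2 * \<bar>a\<bar>"
    by linarith+
  then have "a \<noteq> 0" by simp
  have "real_of_int (2 * \<bar>alpha_r m l r j\<bar>) \<le> real_of_int (2 ^ (m + l))"
    unfolding of_int_le_iff alpha_r_def by (rule abs_cres_le) simp
  then have "2 * \<bar>a\<bar> \<le> 2 ^ (m + l)"
    by (simp add: a_def)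
  have "2 ^ (m + l) / (2 * \<bar>a\<bar>) \<le> 2 ^ (m + l) / 2 ^ t"
    using \<open>2 ^ t \<le> 2 * \<bar>a\<bar>\<close> \<open>0 < \<bar>a\<bar>\<close> by (intro divide_left_mono) auto
  then have "cmod (\<Sum>b<k. cis (2 * pi * alpha_r m l r j / 2 ^ (m + l) * real b))
      \<le> 2 ^ (m + l) / 2 ^ t" for k
    using norm_sum_cis_frac_le[OF \<open>a \<noteq> 0\<close> \<open>2 * \<bar>a\<bar> \<le> 2 ^ (m + l)\<close>, of k]
    unfolding a_def by linarith
  then have "freq_prob m l r j \<le> real_of_int r * ((2 ^ (m + l) / 2 ^ t) / 2 ^ (m + l))\<^sup>2"
    by (rule freq_prob_le_partial_sums[OF \<open>0 < r\<close>])
  also have "\<dots> = real_of_int r / 4 ^ t"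
    by (simp add: power_divide power2_eq_square flip: power_mult_distrib)
  finally show ?thesis .
qed

lemma freq_prob_le_inverse_r:
  assumes "0 < r" and "2 * r \<le> 2 ^ (m + l)"
  shows "freq_prob m l r j \<le> 9 / (4 * real_of_int r)"
proof -
  define L where "L = nat (2 ^ (m + l) div r)"
  have "r * (2 ^ (m + l) div r) \<le> 2 ^ (m + l)"
    using \<open>0 < r\<close> mult_div_mod_eq[of r "2 ^ (m + l)"] pos_mod_sign[of r "2 ^ (m + l)"]
    by linarith
  then have "r * int L \<le> 2 ^ (m + l)"
    using \<open>0 < r\<close> by (simp add: L_def)
  then have "2 * (r * (int L + 1)) \<le> 3 * 2 ^ (m + l)"
    using assms(2) by (simp add: algebra_simps)
  then have "real_of_int (2 * (r * (int L + 1))) \<le> real_of_int (3 * 2 ^ (m + l))"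
    by (simp only: of_int_le_iff)
  then have bound: "real_of_int r * (real L + 1) \<le> 3 / 2 * 2 ^ (m + l)"
    by simp
  have sum_cis_le: "cmod (\<Sum>b<k. cis (\<theta> * real b)) \<le> real k" for \<theta> k
    using norm_sum[of "\<lambda>b. cis (\<theta> * real b)" "{..<k}"] by simp
  have "freq_prob m l r j \<le> real_of_int r * ((real L + 1) / 2 ^ (m + l))\<^sup>2"
    by (rule freq_prob_le_partial_sums[OF \<open>0 < r\<close> order_trans[OF sum_cis_le]]) (simp add: L_def)
  also have "real_of_int r * ((real L + 1) / 2 ^ (m + l))\<^sup>2
      = (real_of_int r * (real L + 1))\<^sup>2 / (real_of_int r * (2 ^ (m + l))\<^sup>2)"
    using \<open>0 < r\<close> by (simp add: field_simps power2_eq_square)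
  also have "\<dots> \<le> (3 / 2 * 2 ^ (m + l))\<^sup>2 / (real_of_int r * (2 ^ (m + l))\<^sup>2)"
    using \<open>0 < r\<close> bound by (intro divide_right_mono power_mono) auto
  also have "\<dots> = 9 / (4 * real_of_int r)"
    by (simp add: field_simps power2_eq_square)
  finally show ?thesis .
qed

lemma rho_le_of_freq_prob_le:
  fixes B :: real
  assumes "0 < t" and "0 \<le> B"
    and "\<And>j. 2 ^ (t - 1) \<le> \<bar>alpha_r m l r j\<bar> \<Longrightarrow> freq_prob m l r j \<le> B"
  shows "rho m l r t \<le> 2 ^ t * B"
proof -
  let ?S = "{j \<in> {0..<(2::int) ^ (m + l)}. 2 ^ (t - 1) \<le> \<bar>alpha_r m l r j\<bar> \<and> \<bar>alpha_r m l r j\<bar> < 2 ^ t}"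
  have "rho m l r t \<le> card ?S * B"
    unfolding rho_def by (rule sum_bounded_above) (use assms(3) in auto)
  also have "\<dots> \<le> 2 ^ t * B"
    using card_dyadic_shell_cres_mult_le[OF \<open>0 < t\<close>, of "m + l" r] \<open>0 \<le> B\<close>
    by (intro mult_right_mono) (simp_all add: alpha_r_def flip: of_nat_le_iff)
  finally show ?thesis .
qed

lemma rho_le_powr_m_minus_t:
  assumes "0 < r" and "r \<le> 2 ^ m" and "0 < t"
  shows "rho m l r t \<le> 2 powr (real m - real t)"
proof -
  have "rho m l r t \<le> 2 ^ t * (real_of_int r / 4 ^ t)"
    using assms by (intro rho_le_of_freq_prob_le freq_prob_le_of_abs_alpha_r_ge) auto
  also have "\<dots> = real_of_int r / 2 ^ t"
  proof -
    have "(4::real) ^ t = 2 ^ t * 2 ^ t" by (simp flip: power_mult_distrib)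
    then show ?thesis by simp
  qed
  also have "\<dots> \<le> 2 ^ m / 2 ^ t"
    using assms(2) by (intro divide_right_mono) (simp_all flip: of_int_le_iff)
  also have "\<dots> = 2 powr (real m - real t)"
    by (simp add: powr_diff powr_realpow)
  finally show ?thesis .
qed

lemma rho_le_powr_t_plus_3_minus_m:
  assumes "0 < l" and "2 ^ (m - 1) \<le> r" and "r < 2 ^ m" and "0 < t"
  shows "rho m l r t \<le> 2 powr (real t + 3 - real m)"
proof -
  have "0 < m"
    using assms(2,3) by (cases m) auto
  have "0 < r"
    using assms(2) zero_less_power[of "2::int" "m - 1"] by linarith
  have "(2::int) ^ Suc m \<le> 2 ^ (m + l)"
    using \<open>0 < l\<close> by (intro power_increasing) auto
  then have "2 * r \<le> 2 ^ (m + l)"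
    using \<open>r < 2 ^ m\<close> by simp
  moreover have "(2::real) ^ (m - 1) \<le> real_of_int r"
    using assms(2) by (simp flip: of_int_le_iff)
  ultimately have "rho m l r t \<le> 2 ^ t * (9 / (4 * 2 ^ (m - 1)))"
    using assms \<open>0 < r\<close> by (intro rho_le_of_freq_prob_le order_trans[OF freq_prob_le_inverse_r]) (auto intro!: frac_le)
  also have "\<dots> \<le> 2 ^ t * 8 / 2 ^ m"
    using \<open>0 < m\<close> by (cases m) (simp_all add: field_simps)
  also have "\<dots> = 2 powr (real t + 3 - real m)"
    by (simp add: powr_diff powr_add powr_realpow)
  finally show ?thesis .
qed

theorem mainTheorem16:
  fixes m l :: nat and r :: int
  assumes "0 < m" and "0 < l"
  shows "(2 \<le> r \<and> r < 2 ^ m \<longrightarrow>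
            (\<forall>t::nat. 0 < t \<longrightarrow> rho m l r t \<le> 2 powr (real m - real t)))
       \<and> (2 ^ (m - 1) \<le> r \<and> r < 2 ^ m \<and> 2 \<le> r \<longrightarrow>
            (\<forall>t::nat. 0 < t \<longrightarrow>
               rho m l r t \<le> min (2 powr (real m - real t)) (2 powr (real t + 3 - real m))))"
  using rho_le_powr_m_minus_t[of r m] rho_le_powr_t_plus_3_minus_m[OF \<open>0 < l\<close>] by auto

end
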